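(* For every $\zeta\in\mathbb C$ with $|\zeta|<1$, the series $\sum_{n=0}^\infty\zeta^nL_0^n(J)$ converges absolutely with respect to the entrywise $\ell_1$-norm $\|C\|=\sum_{x,y}|C(x,y)|$, and \[ \sum_{n=0}^\infty\zeta^nL_0^n(J)=\frac1{1-\zeta}J+\frac{2\zeta(I-Q)\,[N-\zeta(N-2+2Q)]^{-1}}{N(1-\zeta)^2\,\mathrm{tr}\big((N-\zeta(N-2+2Q))^{-1}\big)}. \]
   Context: $E$ is a finite set with $N=\#E>8$ elements, listed in a fixed order; $\mathsf M_E$ is the space of complex $N\times N$ matrices indexed by $E\times E$. $Q$ is an irreducible stochastic matrix on $E$ with $Q(x,y)=Q(y,x)$ for all $x,y$ and $\mathrm{tr}(Q)=0$. $I$ is the identity, $J$ the matrix with all entries $1/N$, and $[N-\zeta(N-2+2Q)]^{-1}$ the inverse of $NI-\zeta((N-2)I+2Q)$. The linear operator $L_0:\mathsf M_E\to\mathsf M_E$ is $L_0(C)=\frac{N-2}NC+\frac1N(CQ+QC)-\frac{2\,\mathrm{tr}(C)}{N^2}Q+\frac{2\,\mathrm{tr}(C)}{N^2}I$, and $L_0^n$ is its $n$-fold composition ($L_0^0=$ identity). *)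

theory Defs
  imports "HOL-Analysis.Analysis"
begin

text \<open>Matrices indexed by E x E are modelled as complex^'e^'e for a finite type 'e (the set E).\<close>

definition cmat :: "real^'e^'e \<Rightarrow> complex^'e^'e" where
  "cmat Q = (\<chi> i j. complex_of_real (Q$i$j))"

definition mpow :: "'a::semiring_1^'e^'e \<Rightarrow> nat \<Rightarrow> 'a^'e^'e" where
  "mpow A n = (((**) A) ^^ n) (mat 1)"

definition stochastic :: "real^'e^'e \<Rightarrow> bool" where
  "stochastic Q \<longleftrightarrow> (\<forall>x y. Q$x$y \<ge> 0) \<and> (\<forall>x. (\<Sum>y\<in>UNIV. Q$x$y) = 1)"

definition irreducible_mat :: "real^'e^'e \<Rightarrow> bool" where
  "irreducible_mat Q \<longleftrightarrow> (\<forall>x y. \<exists>n. mpow Q n $ x $ y > 0)"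

definition Jmat :: "complex^'e^'e" where
  "Jmat = (\<chi> i j. 1 / of_nat CARD('e))"

definition l1norm :: "complex^'e^'e \<Rightarrow> real" where
  "l1norm C = (\<Sum>x\<in>UNIV. \<Sum>y\<in>UNIV. cmod (C$x$y))"

definition msc :: "complex \<Rightarrow> complex^'e^'e \<Rightarrow> complex^'e^'e" (infixr "*m" 75) where
  "c *m A = (\<chi> i j. c * A$i$j)"

definition L0 :: "real^'e^'e \<Rightarrow> complex^'e^'e \<Rightarrow> complex^'e^'e" where
  "L0 Q C = (let N = of_nat CARD('e) :: complex; Qc = cmat Q in
     ((N - 2) / N) *m C + (1 / N) *m (C ** Qc + Qc ** C)
     - (2 * trace C / N^2) *m Qc + (2 * trace C / N^2) *m mat 1)"

end

theory Submission
  imports Defs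
begin

text \<open>
  Write \<open>N = #E\<close>, \<open>P = (2/N)(I - Q)\<close> and \<open>X\<^sub>n = L0\<^sup>n(J)\<close>.  All \<open>X\<^sub>n\<close> commute with \<open>Q\<close>, and
  on matrices commuting with \<open>Q\<close> the operator acts as \<open>C \<mapsto> C - P C + (tr C / N) P\<close>.

  (1) Boundedness.  \<open>L0\<close> is the complexification of a real operator \<open>L0r\<close>.  Irreducibility
  makes \<open>P + J\<close> invertible, which lets us write \<open>X\<^sub>n = I + P Y\<^sub>n\<close> with
  \<open>Y\<^sub>0 = J - (P + J)\<^sup>-\<^sup>1\<close> and \<open>Y\<^sub>n\<^sub>+\<^sub>1 = Y\<^sub>n - P Y\<^sub>n + (tr(P Y\<^sub>n)/N) I\<close>.  Along this recursion
  the Lyapunov functional \<open>tr(P Y\<^sup>2)\<close> does not increase, because \<open>P \<le> 4/N\<close> as a quadratic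
  form and \<open>N > 2\<close>; and \<open>tr((P Y)\<^sup>2) \<le> (4/N) tr(P Y\<^sup>2)\<close>.  Hence the entries of \<open>X\<^sub>n\<close>
  are uniformly bounded.  The quadratic-form bounds all come from one inequality
  \<open>|tr(A X\<^sup>2)| \<le> tr(X\<^sup>2)\<close> for symmetric doubly stochastic \<open>A\<close>, applied to \<open>Q\<close> and \<open>Q\<^sup>2\<close>.

  (2) Summation.  Bounded entries give absolute convergence for \<open>|\<zeta>| < 1\<close>; the sum \<open>S\<close>
  solves \<open>S = J + \<zeta> L0(S)\<close> and commutes with \<open>Q\<close>.

  (3) Closed form.  For such \<open>S\<close> the equation reads \<open>W S = N J + (2\<zeta> tr S / N)(I - Q)\<close> with
  \<open>W = N - \<zeta>(N - 2 + 2Q)\<close>, which is invertible for \<open>|\<zeta>| < 1\<close> by diagonal dominance.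
  Solving and taking traces yields the formula.
\<close>

lemma matrix_diff_ldistrib: "(A::'a::ring_1^'n^'m) ** (B - C) = A ** B - A ** C"
  by (vector matrix_matrix_mult_def sum_subtractf[symmetric] field_simps)

lemma matrix_diff_rdistrib: "((A::'a::ring_1^'n^'m) - B) ** C = A ** C - B ** C"
  by (vector matrix_matrix_mult_def sum_subtractf[symmetric] field_simps)

lemma matrix_add_rdistrib: "((A::'a::semiring_1^'n^'m) + B) ** C = A ** C + B ** C"
  by (vector matrix_matrix_mult_def sum.distrib[symmetric] field_simps)

lemma transpose_add: "transpose (A + B) = transpose A + transpose (B::'a::semiring_1^'n^'n)"
  by (simp add: vec_eq_iff transpose_def)

lemma transpose_diff: "transpose (A - B) = transpose A - transpose (B::'a::ring_1^'n^'n)"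
  by (simp add: vec_eq_iff transpose_def)

lemma trace_scaleR: "trace (c *\<^sub>R (A::real^'n^'n)) = c * trace A"
  by (simp add: trace_def sum_distrib_left)

lemma scaleR_matrix_vector_assoc: "(c *\<^sub>R A) *v x = c *\<^sub>R (A *v (x :: real^'n))"
  by (simp add: vec_eq_iff matrix_vector_mult_def sum_distrib_left mult.assoc)

lemma matrix_inv_of_trivial_kernel:
  fixes A :: "'a::field^'n^'n"
  assumes "\<And>x. A *v x = 0 \<Longrightarrow> x = 0"
  shows "A ** matrix_inv A = mat 1" and "matrix_inv A ** A = mat 1"
proof -
  have "invertible A"
    using assms by (simp add: invertible_left_inverse matrix_left_invertible_ker)
  then have "A ** matrix_inv A = mat 1 \<and> matrix_inv A ** A = mat 1"
    unfolding matrix_inv_def invertible_def by (rule someI_ex)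
  then show "A ** matrix_inv A = mat 1" and "matrix_inv A ** A = mat 1" by auto
qed

lemma inverse_commute:
  fixes A M B :: "'a::semiring_1^'n^'n"
  assumes "A ** M = mat 1" and "M ** A = mat 1" and "A ** B = B ** A"
  shows "M ** B = B ** M"
proof -
  have "M ** B = M ** B ** (A ** M)" by (simp add: assms(1))
  also have "\<dots> = M ** (A ** B) ** M" by (simp add: assms(3) matrix_mul_assoc)
  also have "\<dots> = (M ** A) ** B ** M" by (simp add: matrix_mul_assoc)
  also have "\<dots> = B ** M" by (simp add: assms(2))
  finally show ?thesis .
qed

lemma inverse_symmetric:
  fixes A M :: "'a::comm_semiring_1^'n^'n"
  assumes "A ** M = mat 1" and "M ** A = mat 1" and "transpose A = A"
  shows "transpose M = M"
proof -
  have "transpose M ** A = mat 1"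
    using arg_cong[OF assms(1), of transpose] by (simp add: matrix_transpose_mul assms(3))
  then have "transpose M = transpose M ** (A ** M)" by (simp add: assms(1))
  also have "\<dots> = (transpose M ** A) ** M" by (simp add: matrix_mul_assoc)
  also have "\<dots> = M" by (simp add: \<open>transpose M ** A = mat 1\<close>)
  finally show ?thesis .
qed

lemma trace_square_symmetric:
  fixes X :: "real^'n^'n"
  assumes "transpose X = X"
  shows "trace (X ** X) = (\<Sum>i\<in>UNIV. \<Sum>j\<in>UNIV. (X$i$j)^2)"
proof -
  have "X$j$i = X$i$j" for i j
    using arg_cong[OF assms, of "\<lambda>A. A$i$j"] by (simp add: transpose_def)
  then show ?thesis by (simp add: trace_def matrix_matrix_mult_def power2_eq_square)
qed

text \<open>This follows from
  \<open>0 \<le> \<Sum>\<^sub>i\<^sub>j\<^sub>k A\<^sub>i\<^sub>j (X\<^sub>i\<^sub>k \<plusminus> X\<^sub>j\<^sub>k)\<^sup>2 = 2 tr(X\<^sup>2) \<plusminus> 2 tr(A X\<^sup>2)\<close>.\<close>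
lemma doubly_stochastic_trace_bound:
  fixes A X :: "real^'n^'n"
  assumes nonneg: "\<And>i j. A$i$j \<ge> 0" and rows: "\<And>i. (\<Sum>j\<in>UNIV. A$i$j) = 1"
    and symA: "transpose A = A" and symX: "transpose X = X"
  shows "\<bar>trace (A ** (X ** X))\<bar> \<le> trace (X ** X)"
proof -
  have A: "A$j$i = A$i$j" and X: "X$j$i = X$i$j" for i j
    using arg_cong[OF symA, of "\<lambda>B. B$i$j"] arg_cong[OF symX, of "\<lambda>B. B$i$j"]
    by (simp_all add: transpose_def)
  define q where "q = (\<Sum>i\<in>UNIV. \<Sum>k\<in>UNIV. (X$i$k)^2)"
  have tr: "trace (A ** (X ** X)) = (\<Sum>i\<in>UNIV. \<Sum>j\<in>UNIV. \<Sum>k\<in>UNIV. A$i$j * (X$i$k * X$j$k))"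
    unfolding trace_def matrix_matrix_mult_def
    by (simp add: sum_distrib_left) (intro sum.cong refl, simp add: X mult_ac)
  have left: "(\<Sum>i\<in>UNIV. \<Sum>j\<in>UNIV. \<Sum>k\<in>UNIV. A$i$j * (X$i$k)^2) = q"
    unfolding q_def by (subst sum.swap) (simp add: rows flip: sum_distrib_right)
  have right: "(\<Sum>i\<in>UNIV. \<Sum>j\<in>UNIV. \<Sum>k\<in>UNIV. A$i$j * (X$j$k)^2) = q"
    unfolding q_def by (subst (2) sum.swap, subst sum.swap) (simp add: A rows flip: sum_distrib_right)
  have "0 \<le> 2 * q + 2 * s * trace (A ** (X ** X))" if "s^2 = 1" for s :: real
  proof -
    have "0 \<le> (\<Sum>i\<in>UNIV. \<Sum>j\<in>UNIV. \<Sum>k\<in>UNIV. A$i$j * (X$i$k + s * X$j$k)^2)"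
      by (intro sum_nonneg mult_nonneg_nonneg nonneg) auto
    also have "\<dots> = (\<Sum>i\<in>UNIV. \<Sum>j\<in>UNIV. \<Sum>k\<in>UNIV. A$i$j * (X$i$k)^2)
        + 2 * s * (\<Sum>i\<in>UNIV. \<Sum>j\<in>UNIV. \<Sum>k\<in>UNIV. A$i$j * (X$i$k * X$j$k))
        + s^2 * (\<Sum>i\<in>UNIV. \<Sum>j\<in>UNIV. \<Sum>k\<in>UNIV. A$i$j * (X$j$k)^2)"
      by (simp add: power2_sum power_mult_distrib distrib_left sum.distrib sum_distrib_left
          mult_ac)
    finally show ?thesis by (simp add: left right tr that)
  qed
  from this[of 1] this[of "-1"] show ?thesis
    using trace_square_symmetric[OF symX] by (simp add: q_def abs_le_iff)
qed

section \<open>Symmetric stochastic matrices\<close>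

definition Jr :: "real^'e^'e" where
  "Jr = (\<chi> i j. 1 / real CARD('e))"

definition Pmat :: "real^'e^'e \<Rightarrow> real^'e^'e" where
  "Pmat Q = (2 / real CARD('e)) *\<^sub>R (mat 1 - Q)"

definition L0r :: "real^'e^'e \<Rightarrow> real^'e^'e \<Rightarrow> real^'e^'e" where
  "L0r Q C = (let N = real CARD('e) in
     ((N - 2) / N) *\<^sub>R C + (1 / N) *\<^sub>R (C ** Q + Q ** C)
     - (2 * trace C / N^2) *\<^sub>R Q + (2 * trace C / N^2) *\<^sub>R mat 1)"

text \<open>The recursion \<open>Y \<mapsto> Y - P Y + (tr(P Y)/N) I\<close> for the matrices \<open>Y\<^sub>n\<close> with
  \<open>L0r\<^sup>n J = I + P Y\<^sub>n\<close>.\<close>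
definition ystep :: "real^'e^'e \<Rightarrow> real^'e^'e \<Rightarrow> real^'e^'e" where
  "ystep Q Y = Y - Pmat Q ** Y + (trace (Pmat Q ** Y) / real CARD('e)) *\<^sub>R mat 1"

text \<open>The invariant of the recursion: \<open>Y\<close> is symmetric and commutes with \<open>Q\<close>.\<close>
definition sym_comm :: "real^'e^'e \<Rightarrow> real^'e^'e \<Rightarrow> bool" where
  "sym_comm Q Y \<longleftrightarrow> transpose Y = Y \<and> Y ** Q = Q ** Y"

definition lyap :: "real^'e^'e \<Rightarrow> real^'e^'e \<Rightarrow> real" where
  "lyap Q Y = trace (Pmat Q ** (Y ** Y))"

locale sym_stochastic =
  fixes Q :: "real^'e^'e"
  assumes nonneg: "\<And>x y. Q$x$y \<ge> 0"
    and row_sums: "\<And>x. (\<Sum>y\<in>UNIV. Q$x$y) = 1"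
    and symmetric: "\<And>x y. Q$x$y = Q$y$x"
    and card_gt_2: "CARD('e) > 2"
begin

lemma col_sums: "(\<Sum>x\<in>UNIV. Q$x$y) = 1"
  using row_sums[of y] by (simp add: symmetric)

lemma transpose_Q: "transpose Q = Q"
  by (simp add: transpose_def vec_eq_iff symmetric)

lemma N_pos: "real CARD('e) > 0"
  using card_gt_2 by simp

lemma Q_Jr: "Q ** Jr = Jr"
  by (simp add: vec_eq_iff matrix_matrix_mult_def Jr_def flip: sum_divide_distrib) (simp add: row_sums)

lemma Jr_Q: "Jr ** Q = Jr"
  by (simp add: vec_eq_iff matrix_matrix_mult_def Jr_def flip: sum_divide_distrib) (simp add: col_sums)

lemma Jr_Jr: "Jr ** Jr = (Jr :: real^'e^'e)"
  using N_pos by (simp add: vec_eq_iff matrix_matrix_mult_def Jr_def power2_eq_square)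

lemma P_Jr: "Pmat Q ** Jr = 0"
  by (simp add: Pmat_def Q_Jr matrix_diff_rdistrib flip: scalar_matrix_assoc)

lemma Jr_P: "Jr ** Pmat Q = 0"
  by (simp add: Pmat_def matrix_diff_ldistrib matrix_scalar_ac flip: scalar_matrix_assoc)
     (simp add: Jr_Q)

lemma transpose_P: "transpose (Pmat Q) = Pmat Q"
  by (simp add: Pmat_def transpose_scalar transpose_diff transpose_Q)

lemma transpose_Jr: "transpose Jr = Jr"
  by (simp add: Jr_def vec_eq_iff transpose_def)

lemma commute_P: "A ** Q = Q ** A \<Longrightarrow> A ** Pmat Q = Pmat Q ** A"
  by (simp add: Pmat_def matrix_diff_ldistrib matrix_diff_rdistrib matrix_scalar_ac
      scaleR_diff_right flip: scalar_matrix_assoc)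

lemma trace_P_mult: "trace (Pmat Q ** M) = (2 / real CARD('e)) * (trace M - trace (Q ** M))"
  by (simp add: Pmat_def trace_scaleR trace_sub matrix_diff_rdistrib flip: scalar_matrix_assoc)

subsection \<open>Irreducibility\<close>

lemma const_along_paths:
  assumes edge: "\<And>i j. Q$i$j > 0 \<Longrightarrow> x$i = (x$j :: real)"
  shows "mpow Q n $ a $ b > 0 \<Longrightarrow> x$a = x$b"
proof (induction n arbitrary: a)
  case 0
  then show ?case by (simp add: mpow_def mat_def split: if_splits)
next
  case (Suc n)
  have "(\<Sum>k\<in>UNIV. Q$a$k * mpow Q n $ k $ b) > 0"
    using Suc.prems by (simp add: mpow_def matrix_matrix_mult_def)
  then obtain k where k: "Q$a$k * mpow Q n $ k $ b > 0"
    by (metis (no_types, lifting) not_le sum_nonpos)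
  have "Q$a$k > 0"
    using k nonneg[of a k] by (metis less_eq_real_def mult_zero_left)
  moreover have "mpow Q n $ k $ b > 0"
    using k \<open>Q$a$k > 0\<close> zero_less_mult_pos by blast
  ultimately show ?case using Suc.IH edge by simp
qed

lemma dirichlet_form:
  "(\<Sum>i\<in>UNIV. \<Sum>j\<in>UNIV. Q$i$j * (x$i - x$j)^2)
     = 2 * (\<Sum>i\<in>UNIV. (x$i)^2) - 2 * (\<Sum>i\<in>UNIV. x$i * (Q *v x)$i)"
proof -
  have "(\<Sum>i\<in>UNIV. \<Sum>j\<in>UNIV. Q$i$j * (x$i - x$j)^2)
      = (\<Sum>i\<in>UNIV. \<Sum>j\<in>UNIV. Q$i$j * (x$i)^2) - 2 * (\<Sum>i\<in>UNIV. x$i * (Q *v x)$i)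
        + (\<Sum>i\<in>UNIV. \<Sum>j\<in>UNIV. Q$i$j * (x$j)^2)"
    by (simp add: matrix_vector_mult_def power2_eq_square algebra_simps sum.distrib
        sum_subtractf sum_distrib_left)
  also have "(\<Sum>i\<in>UNIV. \<Sum>j\<in>UNIV. Q$i$j * (x$i)^2) = (\<Sum>i\<in>UNIV. (x$i)^2)"
    by (simp add: row_sums flip: sum_distrib_right)
  also have "(\<Sum>i\<in>UNIV. \<Sum>j\<in>UNIV. Q$i$j * (x$j)^2) = (\<Sum>j\<in>UNIV. (x$j)^2)"
    by (subst sum.swap) (simp add: col_sums flip: sum_distrib_right)
  finally show ?thesis by simp
qed

lemma harmonic_imp_const:
  assumes irr: "irreducible_mat Q" and harm: "Q *v x = x"
  shows "x$a = x$b"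
proof -
  have "(\<Sum>i\<in>UNIV. \<Sum>j\<in>UNIV. Q$i$j * (x$i - x$j)^2) = 0"
    unfolding dirichlet_form harm by (simp add: power2_eq_square)
  then have "Q$i$j * (x$i - x$j)^2 = 0" for i j
    by (simp add: sum_nonneg_eq_0_iff sum_nonneg nonneg)
  then have "Q$i$j > 0 \<Longrightarrow> x$i = x$j" for i j by (metis less_irrefl mult_eq_0_iff
      power_eq_0_iff right_minus_eq)
  moreover obtain n where "mpow Q n $ a $ b > 0"
    using irr unfolding irreducible_mat_def by blast
  ultimately show ?thesis using const_along_paths by blast
qed

text \<open>For irreducible \<open>Q\<close> the matrix \<open>P + J\<close> has trivial kernel: summing the equation
  \<open>2(x - Q x) + (\<Sum> x) 1 = 0\<close> gives \<open>\<Sum> x = 0\<close>, so \<open>x\<close> is harmonic, hence constant, hence zero.\<close>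
lemma P_plus_Jr_kernel:
  assumes irr: "irreducible_mat Q" and x: "(Pmat Q + Jr) *v x = 0"
  shows "x = 0"
proof -
  define N where "N = real CARD('e)"
  define s where "s = (\<Sum>j\<in>UNIV. x$j)"
  have N: "N > 0" using N_pos by (simp add: N_def)
  have "Pmat Q *v x = (2 / N) *\<^sub>R (x - Q *v x)"
    by (simp add: Pmat_def N_def scaleR_matrix_vector_assoc matrix_vector_mult_diff_rdistrib)
  moreover have "(Jr *v x)$i = s / N" for i
    by (simp add: Jr_def N_def s_def matrix_vector_mult_def sum_divide_distrib)
  ultimately have "((Pmat Q + Jr) *v x)$i = (2 * (x$i - (Q *v x)$i) + s) / N" for i
    by (simp add: matrix_vector_mult_add_rdistrib add_divide_distrib)
  then have comp: "2 * (x$i - (Q *v x)$i) + s = 0" for i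
    using x N by simp
  have "(\<Sum>i\<in>UNIV. (Q *v x)$i) = s"
    unfolding s_def matrix_vector_mult_def
    by (simp add: sum.swap[of _ UNIV] col_sums flip: sum_distrib_right)
  then have "(\<Sum>i\<in>UNIV. 2 * (x$i - (Q *v x)$i) + s) = N * s"
    by (simp add: sum.distrib sum_subtractf N_def s_def flip: sum_distrib_left)
  then have s0: "s = 0" using comp N by simp
  then have "Q *v x = x" using comp by (simp add: vec_eq_iff)
  then have const: "x$j = x$a" for j a
    using harmonic_imp_const[OF irr] by blast
  have "s = N * x$a" for a
  proof -
    have "s = (\<Sum>j\<in>(UNIV::'e set). x$a)"
      unfolding s_def using const by (intro sum.cong) auto
    then show ?thesis by (simp add: N_def)
  qed
  then show ?thesis using s0 N by (simp add: vec_eq_iff)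
qed

lemma trace_Q_square_bound:
  assumes "transpose X = X"
  shows "\<bar>trace (Q ** (X ** X))\<bar> \<le> trace (X ** X)"
  by (rule doubly_stochastic_trace_bound[OF nonneg row_sums transpose_Q assms])

text \<open>\<open>Q\<^sup>2\<close> is again nonnegative, symmetric and stochastic.\<close>
lemma trace_Q2_square_bound:
  assumes "transpose X = X"
  shows "\<bar>trace ((Q ** Q) ** (X ** X))\<bar> \<le> trace (X ** X)"
proof (rule doubly_stochastic_trace_bound[OF _ _ _ assms])
  show "(Q ** Q)$i$j \<ge> 0" for i j
    by (simp add: matrix_matrix_mult_def sum_nonneg nonneg)
  show "(\<Sum>j\<in>UNIV. (Q ** Q)$i$j) = 1" for i
    by (simp add: matrix_matrix_mult_def sum.swap[of _ UNIV] row_sums flip: sum_distrib_left)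
  show "transpose (Q ** Q) = Q ** Q"
    by (simp add: matrix_transpose_mul transpose_Q)
qed

text \<open>\<open>P \<le> 4/N\<close> in the quadratic-form sense, since \<open>Q \<ge> -1\<close>.\<close>
lemma P_square_form_bound:
  assumes "transpose X = X"
  shows "trace (Pmat Q ** (X ** X)) \<le> (4 / real CARD('e)) * trace (X ** X)"
proof -
  have "- trace (X ** X) \<le> trace (Q ** (X ** X))"
    using trace_Q_square_bound[OF assms] by simp
  then have "(2 / real CARD('e)) * (trace (X ** X) - trace (Q ** (X ** X)))
      \<le> (2 / real CARD('e)) * (2 * trace (X ** X))"
    using N_pos by (intro mult_left_mono) auto
  then show ?thesis by (simp add: trace_P_mult)
qed

text \<open>Since \<open>(4/N) P - P\<^sup>2 = (4/N\<^sup>2)(I - Q\<^sup>2) \<ge> 0\<close>, \<open>tr((P Y)\<^sup>2) \<le> (4/N) tr(P Y\<^sup>2)\<close>.\<close>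
lemma PY_square_bound:
  assumes "sym_comm Q Y"
  shows "trace ((Pmat Q ** Y) ** (Pmat Q ** Y)) \<le> (4 / real CARD('e)) * trace (Pmat Q ** (Y ** Y))"
proof -
  define N where "N = real CARD('e)"
  define M where "M = Y ** Y"
  have N: "N > 0" using N_pos by (simp add: N_def)
  have cp: "Y ** Pmat Q = Pmat Q ** Y"
    using assms commute_P by (simp add: sym_comm_def)
  have "(Pmat Q ** Y) ** (Pmat Q ** Y) = Pmat Q ** (Pmat Q ** M)"
    by (metis M_def cp matrix_mul_assoc)
  moreover have "Q ** (Pmat Q ** M) = Pmat Q ** (Q ** M)"
    using commute_P[of Q] by (simp add: matrix_mul_assoc)
  ultimately have "trace ((Pmat Q ** Y) ** (Pmat Q ** Y))
      = (2 / N) * (trace (Pmat Q ** M) - trace (Pmat Q ** (Q ** M)))"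
    by (simp add: trace_P_mult N_def)
  also have "\<dots> = (4 / N^2) * (trace M - 2 * trace (Q ** M) + trace (Q ** (Q ** M)))"
    using N by (simp add: trace_P_mult N_def power2_eq_square field_simps)
  finally have sq: "trace ((Pmat Q ** Y) ** (Pmat Q ** Y))
      = (4 / N^2) * (trace M - 2 * trace (Q ** M) + trace (Q ** (Q ** M)))" .
  moreover have "trace (Q ** (Q ** M)) \<le> trace M"
    using trace_Q2_square_bound assms by (simp add: sym_comm_def M_def abs_le_iff matrix_mul_assoc)
  with sq N show ?thesis
    by (simp add: trace_P_mult M_def N_def field_simps power2_eq_square)
qed

text \<open>On matrices commuting with \<open>Q\<close>, \<open>L0r (I + E) = I + E - P E + (tr E / N) P\<close>; with
  \<open>E = P Y\<close> one step of \<open>L0r\<close> becomes one step of \<open>ystep\<close> on \<open>Y\<close>.\<close>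
lemma L0r_conj:
  assumes "Y ** Q = Q ** Y"
  shows "L0r Q (mat 1 + Pmat Q ** Y) = mat 1 + Pmat Q ** ystep Q Y"
proof -
  define E where "E = Pmat Q ** Y"
  have EQ: "E ** Q = Q ** E"
    unfolding E_def using commute_P[of Q] assms by (metis matrix_mul_assoc)
  have "L0r Q (mat 1 + E) = mat 1 + E - Pmat Q ** E + (trace E / real CARD('e)) *\<^sub>R Pmat Q"
    unfolding L0r_def Let_def Pmat_def trace_add trace_I using N_pos
    by (simp add: EQ matrix_add_ldistrib matrix_add_rdistrib matrix_diff_rdistrib
        flip: scalar_matrix_assoc)
       (simp add: vec_eq_iff field_simps power2_eq_square)
  then show ?thesis
    by (simp add: E_def ystep_def matrix_add_ldistrib matrix_diff_ldistrib matrix_scalar_ac)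
qed

lemma ystep_sym_comm:
  assumes "sym_comm Q Y"
  shows "sym_comm Q (ystep Q Y)"
proof -
  have s: "transpose Y = Y" and c: "Y ** Q = Q ** Y"
    using assms by (auto simp: sym_comm_def)
  have cp: "Y ** Pmat Q = Pmat Q ** Y" using commute_P[OF c] .
  have "transpose (Pmat Q ** Y) = Pmat Q ** Y"
    by (simp add: matrix_transpose_mul s transpose_P cp)
  moreover have "(Pmat Q ** Y) ** Q = Q ** (Pmat Q ** Y)"
    by (metis c commute_P matrix_mul_assoc)
  ultimately show ?thesis
    by (simp add: sym_comm_def ystep_def transpose_add transpose_diff transpose_scalar s
        matrix_add_rdistrib matrix_add_ldistrib matrix_diff_ldistrib matrix_diff_rdistrib c
        matrix_scalar_ac flip: scalar_matrix_assoc)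
qed

text \<open>With \<open>X = P Y - (tr(P Y)/N) I\<close> (traceless and commuting with \<open>Y\<close>) one has
  \<open>ystep Y = Y - X\<close> and \<open>lyap (Y - X) = lyap Y - 2 tr(X\<^sup>2) + tr(P X\<^sup>2) \<le> lyap Y - (2 - 4/N) tr(X\<^sup>2)\<close>.\<close>
lemma lyap_ystep:
  assumes "sym_comm Q Y"
  shows "lyap Q (ystep Q Y) \<le> lyap Q Y"
proof -
  define N where "N = real CARD('e)"
  define P where "P = Pmat Q"
  define m where "m = trace (P ** Y) / N"
  define X where "X = P ** Y - m *\<^sub>R mat 1"
  have N: "N > 2" using card_gt_2 by (simp add: N_def)
  have s: "transpose Y = Y" and cp: "Y ** P = P ** Y"
    using assms commute_P by (auto simp: sym_comm_def P_def)
  have step: "ystep Q Y = Y - X"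
    by (simp add: ystep_def X_def m_def P_def N_def)
  have XY: "X ** Y = Y ** X"
    by (simp add: X_def matrix_diff_ldistrib matrix_diff_rdistrib matrix_scalar_ac cp
        matrix_mul_assoc flip: scalar_matrix_assoc)
  have symX: "transpose X = X"
    by (simp add: X_def transpose_diff transpose_scalar matrix_transpose_mul s P_def transpose_P
        cp[unfolded P_def])
  have "trace X = 0"
    using N by (simp add: X_def trace_sub trace_scaleR trace_I m_def N_def)
  then have PYX: "trace (P ** (Y ** X)) = trace (X ** X)"
    by (simp add: X_def matrix_mul_assoc matrix_diff_rdistrib matrix_diff_ldistrib trace_sub
        trace_scaleR matrix_scalar_ac flip: scalar_matrix_assoc)
  have "lyap Q (Y - X) = lyap Q Y - trace (P ** (X ** Y)) - (trace (P ** (Y ** X)) - trace (P ** (X ** X)))"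
    by (simp add: lyap_def P_def matrix_diff_ldistrib matrix_diff_rdistrib trace_sub)
  also have "\<dots> = lyap Q Y - 2 * trace (P ** (Y ** X)) + trace (P ** (X ** X))"
    by (simp add: XY)
  also have "\<dots> \<le> lyap Q Y - 2 * trace (X ** X) + (4 / N) * trace (X ** X)"
    using P_square_form_bound[OF symX] PYX by (simp add: P_def N_def)
  also have "\<dots> \<le> lyap Q Y"
  proof -
    have "0 \<le> trace (X ** X)" by (simp add: trace_square_symmetric[OF symX] sum_nonneg)
    moreover have "4 / N \<le> 2" using N by (simp add: field_simps)
    ultimately have "(4 / N) * trace (X ** X) \<le> 2 * trace (X ** X)" by (rule mult_right_mono[rotated])
    then show ?thesis by linarith
  qed
  finally show ?thesis by (simp add: step)
qed

lemma abs_le_one_plus_square: "\<bar>x::real\<bar> \<le> 1 + x^2"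
proof -
  have "0 \<le> (\<bar>x\<bar> - 1)^2" by simp
  then show ?thesis by (simp add: power2_eq_square algebra_simps)
qed

lemma entry_bound:
  assumes "sym_comm Q Y"
  shows "\<bar>(mat 1 + Pmat Q ** Y) $ i $ j\<bar> \<le> 2 + (4 / real CARD('e)) * lyap Q Y"
proof -
  define E where "E = Pmat Q ** Y"
  have "transpose E = E"
    using assms commute_P by (simp add: E_def sym_comm_def matrix_transpose_mul transpose_P)
  have "(E$i$j)^2 \<le> (\<Sum>j\<in>UNIV. (E$i$j)^2)" by (intro member_le_sum) auto
  also have "\<dots> \<le> (\<Sum>i\<in>UNIV. \<Sum>j\<in>UNIV. (E$i$j)^2)"
    by (intro member_le_sum[of i UNIV "\<lambda>i. \<Sum>j\<in>UNIV. (E$i$j)^2"] sum_nonneg) auto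
  also have "\<dots> = trace (E ** E)"
    using trace_square_symmetric[OF \<open>transpose E = E\<close>] by simp
  also have "\<dots> \<le> (4 / real CARD('e)) * lyap Q Y"
    using PY_square_bound[OF assms] by (simp add: E_def lyap_def)
  finally have "(E$i$j)^2 \<le> (4 / real CARD('e)) * lyap Q Y" .
  moreover have "\<bar>mat 1 $ i $ j :: real\<bar> \<le> 1" by (simp add: mat_def)
  moreover note abs_le_one_plus_square[of "E$i$j"]
  ultimately show ?thesis by (simp add: E_def[symmetric])
qed

end

locale irreducible_sym_stochastic = sym_stochastic Q for Q :: "real^'e^'e" +
  assumes irreducible: "irreducible_mat Q"
begin

text \<open>\<open>Z = (P + J)\<^sup>-\<^sup>1\<close>; it is symmetric, commutes with \<open>Q\<close> and fixes \<open>J\<close>, so that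
  \<open>J = I + P (J - Z)\<close> is the starting point of the recursion.\<close>
abbreviation Z where
  "Z \<equiv> matrix_inv (Pmat Q + Jr)"

lemma Z_right: "(Pmat Q + Jr) ** Z = mat 1" and Z_left: "Z ** (Pmat Q + Jr) = mat 1"
  using matrix_inv_of_trivial_kernel[of "Pmat Q + Jr"] P_plus_Jr_kernel[OF irreducible] by auto

lemma Jr_Z: "Jr ** Z = Jr"
proof -
  have "Jr ** (Pmat Q + Jr) = Jr" by (simp add: matrix_add_ldistrib Jr_P Jr_Jr)
  then have "Jr ** Z = Jr ** (Pmat Q + Jr) ** Z" by simp
  also have "\<dots> = Jr" by (simp add: Z_right flip: matrix_mul_assoc)
  finally show ?thesis .
qed

lemma sym_comm_initial: "sym_comm Q (Jr - Z)"
proof -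
  have "(Pmat Q + Jr) ** Q = Q ** (Pmat Q + Jr)"
    using commute_P[of Q] by (simp add: matrix_add_ldistrib matrix_add_rdistrib Q_Jr Jr_Q)
  then have "Z ** Q = Q ** Z" by (rule inverse_commute[OF Z_right Z_left])
  moreover have "transpose Z = Z"
    by (rule inverse_symmetric[OF Z_right Z_left]) (simp add: transpose_add transpose_P transpose_Jr)
  ultimately show ?thesis
    by (simp add: sym_comm_def transpose_diff transpose_Jr matrix_diff_ldistrib
        matrix_diff_rdistrib Q_Jr Jr_Q)
qed

lemma initial_decomposition: "mat 1 + Pmat Q ** (Jr - Z) = Jr"
proof -
  have "Pmat Q ** Z = mat 1 - Jr ** Z"
    using Z_right by (simp add: matrix_add_rdistrib algebra_simps)
  then show ?thesis by (simp add: matrix_diff_ldistrib P_Jr Jr_Z)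
qed

lemma L0r_iterates:
  "sym_comm Q ((ystep Q ^^ n) (Jr - Z))
   \<and> (L0r Q ^^ n) Jr = mat 1 + Pmat Q ** (ystep Q ^^ n) (Jr - Z)"
proof (induction n)
  case 0
  show ?case by (simp add: sym_comm_initial initial_decomposition)
next
  case (Suc n)
  then have "sym_comm Q ((ystep Q ^^ n) (Jr - Z))" by simp
  then show ?case
    using Suc ystep_sym_comm L0r_conj by (simp add: sym_comm_def)
qed

text \<open>The iterates commute with \<open>Q\<close>, being of the form \<open>I + P Y\<^sub>n\<close>.\<close>
lemma L0r_iterates_commute:
  "(L0r Q ^^ n) Jr ** Q = Q ** (L0r Q ^^ n) Jr"
proof -
  define Y where "Y = (ystep Q ^^ n) (Jr - Z)"
  have "Y ** Q = Q ** Y" using L0r_iterates[of n] by (simp add: Y_def sym_comm_def)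
  then have "(Pmat Q ** Y) ** Q = Q ** (Pmat Q ** Y)" by (metis commute_P matrix_mul_assoc)
  then show ?thesis
    using L0r_iterates[of n] by (simp add: Y_def[symmetric] matrix_add_ldistrib matrix_add_rdistrib)
qed

lemma L0r_iterates_bounded:
  "\<bar>(L0r Q ^^ n) Jr $ i $ j\<bar> \<le> 2 + (4 / real CARD('e)) * lyap Q (Jr - Z)"
proof -
  have "lyap Q ((ystep Q ^^ n) (Jr - Z)) \<le> lyap Q (Jr - Z)"
  proof (induction n)
    case (Suc n)
    have "lyap Q ((ystep Q ^^ Suc n) (Jr - Z)) \<le> lyap Q ((ystep Q ^^ n) (Jr - Z))"
      using lyap_ystep L0r_iterates[of n] by simp
    then show ?case using Suc.IH by linarith
  qed simp
  then have "(4 / real CARD('e)) * lyap Q ((ystep Q ^^ n) (Jr - Z))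
      \<le> (4 / real CARD('e)) * lyap Q (Jr - Z)"
    using N_pos by (intro mult_left_mono) auto
  then show ?thesis
    using entry_bound[of "(ystep Q ^^ n) (Jr - Z)" i j] L0r_iterates[of n] by simp
qed

end

section \<open>Complex matrices and summation\<close>

lemma msc_nth [simp]: "(c *m A) $ i $ j = c * A $ i $ j"
  by (simp add: msc_def)

lemma msc_one [simp]: "1 *m A = A"
  by (simp add: vec_eq_iff)

lemma msc_zero [simp]: "c *m 0 = 0"
  by (simp add: vec_eq_iff)

lemma msc_mult_left: "(c *m A) ** B = c *m (A ** B)"
  by (simp add: vec_eq_iff matrix_matrix_mult_def sum_distrib_left mult.assoc)

lemma msc_mult_right: "A ** (c *m B) = c *m (A ** B)"
  by (simp add: vec_eq_iff matrix_matrix_mult_def sum_distrib_left mult_ac)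

lemma msc_add: "c *m (A + B) = c *m A + c *m B"
  by (simp add: vec_eq_iff algebra_simps)

lemma msc_diff: "c *m (A - B) = c *m A - c *m B"
  by (simp add: vec_eq_iff algebra_simps)

lemma msc_msc: "a *m (b *m A) = (a * b) *m A"
  by (simp add: vec_eq_iff)

lemma trace_msc: "trace (c *m A) = c * trace A"
  by (simp add: trace_def sum_distrib_left)

lemma msc_matrix_vector: "((c *m A) *v x) $ i = c * (A *v x) $ i"
  by (simp add: matrix_vector_mult_def sum_distrib_left mult.assoc)

lemma scaleR_msc: "c *\<^sub>R (A::complex^'n^'n) = complex_of_real c *m A"
  unfolding vec_eq_iff by (simp add: msc_def) (simp add: scaleR_conv_of_real)

lemma msc_bounded_linear: "bounded_linear (\<lambda>A::complex^'n^'n. c *m A)"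
proof -
  have "linear (\<lambda>A::complex^'n^'n. c *m A)"
    by (intro linearI) (simp_all add: msc_add scaleR_msc msc_msc mult.commute)
  then show ?thesis by (simp add: linear_conv_bounded_linear)
qed

lemma cmat_nth [simp]: "cmat A $ i $ j = complex_of_real (A $ i $ j)"
  by (simp add: cmat_def)

lemma cmat_mult: "cmat (A ** B) = cmat A ** cmat B"
  by (simp add: vec_eq_iff matrix_matrix_mult_def)

lemma trace_cmat: "trace (cmat A) = complex_of_real (trace A)"
  by (simp add: trace_def)

lemma cmat_Jr: "cmat Jr = Jmat"
  by (simp add: vec_eq_iff Jr_def Jmat_def)

lemma L0_cmat: "L0 Q (cmat C) = cmat (L0r Q C)"
  by (simp add: L0_def L0r_def Let_def vec_eq_iff flip: cmat_mult)
     (simp add: trace_cmat field_simps mat_def)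

lemma L0_iterates_cmat: "(L0 Q ^^ n) Jmat = cmat ((L0r Q ^^ n) Jr)"
  by (induction n) (simp_all add: cmat_Jr L0_cmat)

lemma L0_add: "L0 Q (A + B) = L0 Q A + L0 Q B"
  by (simp add: L0_def Let_def vec_eq_iff matrix_add_ldistrib matrix_add_rdistrib trace_add
      algebra_simps) (simp add: field_simps)

lemma L0_msc: "L0 Q (c *m A) = c *m L0 Q A"
  by (simp add: L0_def Let_def vec_eq_iff msc_mult_left msc_mult_right trace_msc algebra_simps)

lemma L0_bounded_linear: "bounded_linear (L0 Q)"
proof -
  have "linear (L0 Q)"
    by (intro linearI) (simp_all add: L0_add L0_msc scaleR_msc)
  then show ?thesis by (simp add: linear_conv_bounded_linear)
qed

lemma l1norm_msc: "l1norm (c *m A) = cmod c * l1norm A"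
  by (simp add: l1norm_def norm_mult sum_distrib_left)

lemma norm_le_l1norm: "norm A \<le> l1norm A"
proof -
  have "norm A \<le> (\<Sum>i\<in>UNIV. norm (A$i))"
    unfolding norm_vec_def by (rule L2_set_le_sum) simp
  also have "\<dots> \<le> (\<Sum>i\<in>UNIV. \<Sum>j\<in>UNIV. norm (A$i$j))"
    by (intro sum_mono) (simp add: norm_vec_def L2_set_le_sum)
  finally show ?thesis by (simp add: l1norm_def)
qed

lemma l1norm_le_entry_bound:
  fixes A :: "complex^'n^'n"
  assumes "\<And>i j. cmod (A$i$j) \<le> K"
  shows "l1norm A \<le> real CARD('n) * real CARD('n) * K"
proof -
  have "l1norm A \<le> (\<Sum>i\<in>(UNIV::'n set). \<Sum>j\<in>(UNIV::'n set). K)"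
    unfolding l1norm_def by (intro sum_mono assms)
  then show ?thesis by simp
qed

lemma bounded_power_series_summable:
  fixes X :: "nat \<Rightarrow> complex^'n^'n"
  assumes z: "cmod \<zeta> < 1" and bound: "\<And>n. l1norm (X n) \<le> C"
  shows "summable (\<lambda>n. l1norm (\<zeta>^n *m X n))" and "summable (\<lambda>n. \<zeta>^n *m X n)"
proof -
  have l1_bound: "l1norm (\<zeta>^n *m X n) \<le> C * cmod \<zeta> ^ n" for n
    using bound[of n] by (simp add: l1norm_msc norm_power mult.commute mult_right_mono)
  have geom: "summable (\<lambda>n. C * cmod \<zeta> ^ n)"
    using z by (intro summable_mult summable_geometric) simp
  have nonneg: "l1norm A \<ge> 0" for A :: "complex^'n^'n"
    by (simp add: l1norm_def sum_nonneg)
  show l1: "summable (\<lambda>n. l1norm (\<zeta>^n *m X n))"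
    by (rule summable_comparison_test'[OF geom]) (simp add: nonneg l1_bound)
  have "summable (\<lambda>n. norm (\<zeta>^n *m X n))"
    by (rule summable_comparison_test'[OF l1]) (simp add: nonneg norm_le_l1norm)
  then show "summable (\<lambda>n. \<zeta>^n *m X n)" by (rule summable_norm_cancel)
qed

lemma power_series_fixed_point:
  assumes "(\<lambda>n. \<zeta>^n *m (L0 Q ^^ n) A) sums S"
  shows "S = A + \<zeta> *m L0 Q S"
proof -
  have "bounded_linear (\<lambda>B. \<zeta> *m L0 Q B)"
    using bounded_linear_compose[OF msc_bounded_linear L0_bounded_linear] .
  then have "(\<lambda>n. \<zeta> *m L0 Q (\<zeta>^n *m (L0 Q ^^ n) A)) sums (\<zeta> *m L0 Q S)"
    using assms by (rule bounded_linear.sums)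
  then have "(\<lambda>n. \<zeta>^Suc n *m (L0 Q ^^ Suc n) A) sums (\<zeta> *m L0 Q S)"
    by (simp add: L0_msc msc_msc)
  then have "(\<lambda>n. \<zeta>^n *m (L0 Q ^^ n) A) sums (\<zeta> *m L0 Q S + \<zeta>^0 *m (L0 Q ^^ 0) A)"
    using sums_Suc_iff[of "\<lambda>n. \<zeta>^n *m (L0 Q ^^ n) A"] by blast
  then have "(\<lambda>n. \<zeta>^n *m (L0 Q ^^ n) A) sums (\<zeta> *m L0 Q S + A)"
    by (simp only: power_0 funpow_0 msc_one)
  then show ?thesis
    unfolding add.commute[of A] by (rule sums_unique2[OF assms])
qed

lemma sums_commute:
  fixes f :: "nat \<Rightarrow> complex^'n^'n"
  assumes "f sums S" and "\<And>n. f n ** B = B ** f n"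
  shows "S ** B = B ** S"
proof -
  define h where "h A = A ** B - B ** A" for A :: "complex^'n^'n"
  have "linear h"
    by (intro linearI) (simp_all add: h_def matrix_add_ldistrib matrix_add_rdistrib scaleR_msc
        msc_mult_left msc_mult_right msc_diff)
  then have "(\<lambda>n. h (f n)) sums h S"
    using bounded_linear.sums[OF _ assms(1)] linear_conv_bounded_linear by blast
  moreover have "(\<lambda>n. h (f n)) = (\<lambda>n. 0)" by (simp add: h_def assms(2))
  ultimately have "h S = 0" using sums_zero sums_unique2 by metis
  then show ?thesis by (simp add: h_def)
qed

section \<open>The closed form\<close>

text \<open>If \<open>|b| < |a|\<close> and \<open>Q\<close> is stochastic, \<open>a I - b Q\<close> has trivial kernel: at a coordinate
  where \<open>|x\<^sub>i|\<close> is maximal, \<open>|a| |x\<^sub>i| = |b| |(Q x)\<^sub>i| \<le> |b| |x\<^sub>i|\<close>.\<close>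
lemma stochastic_shift_kernel:
  fixes Q :: "real^'n^'n" and x :: "complex^'n"
  assumes nonneg: "\<And>i j. Q$i$j \<ge> 0" and rows: "\<And>i. (\<Sum>j\<in>UNIV. Q$i$j) = 1"
    and ab: "cmod b < cmod a" and x: "(a *m mat 1 - b *m cmat Q) *v x = 0"
  shows "x = 0"
proof -
  have "Max (range (\<lambda>j. cmod (x$j))) \<in> range (\<lambda>j. cmod (x$j))" by (rule Max_in) auto
  then obtain i where i: "cmod (x$i) = Max (range (\<lambda>j. cmod (x$j)))" by (metis rangeE)
  have max: "cmod (x$j) \<le> cmod (x$i)" for j unfolding i by (rule Max_ge) auto
  have "a * x$i = b * (cmat Q *v x)$i"
    using arg_cong[OF x, of "\<lambda>v. v$i"]
    by (simp add: matrix_vector_mult_diff_rdistrib msc_matrix_vector)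
  then have "cmod a * cmod (x$i) = cmod b * cmod ((cmat Q *v x)$i)"
    by (metis norm_mult)
  also have "\<dots> \<le> cmod b * cmod (x$i)"
  proof (rule mult_left_mono)
    have "cmod ((cmat Q *v x)$i) \<le> (\<Sum>j\<in>UNIV. cmod (complex_of_real (Q$i$j) * x$j))"
      unfolding matrix_vector_mult_def by (simp add: norm_sum)
    also have "\<dots> \<le> (\<Sum>j\<in>UNIV. Q$i$j * cmod (x$i))"
      by (intro sum_mono) (simp add: norm_mult nonneg mult_left_mono max)
    finally show "cmod ((cmat Q *v x)$i) \<le> cmod (x$i)"
      by (simp add: rows flip: sum_distrib_right)
  qed simp
  finally have "(cmod a - cmod b) * cmod (x$i) \<le> 0" by (simp add: algebra_simps)
  with ab have "cmod (x$i) \<le> 0" by (simp add: mult_le_0_iff)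
  then have "cmod (x$j) \<le> 0" for j using max order_trans by blast
  then show ?thesis by (simp add: vec_eq_iff)
qed

definition Wmat :: "real^'e^'e \<Rightarrow> complex \<Rightarrow> complex^'e^'e" where
  "Wmat Q \<zeta> = (let N = of_nat CARD('e) :: complex in
     N *m mat 1 - \<zeta> *m ((N - 2) *m mat 1 + 2 *m cmat Q))"

lemma Wmat_decomp:
  fixes Q :: "real^'e^'e"
  shows "Wmat Q \<zeta> = (of_nat CARD('e) * (1 - \<zeta>)) *m mat 1 + (2 * \<zeta>) *m (mat 1 - cmat Q)"
  by (simp add: Wmat_def Let_def vec_eq_iff algebra_simps)

context sym_stochastic
begin

text \<open>For \<open>|\<zeta>| < 1\<close> the matrix \<open>W = (N - \<zeta>(N - 2)) I - 2\<zeta> Q\<close> is invertible, since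
  \<open>|N - \<zeta>(N - 2)| \<ge> N - |\<zeta>|(N - 2) > 2|\<zeta>|\<close>.\<close>
lemma Wmat_inverse:
  assumes z: "cmod \<zeta> < 1"
  shows "Wmat Q \<zeta> ** matrix_inv (Wmat Q \<zeta>) = mat 1" and "matrix_inv (Wmat Q \<zeta>) ** Wmat Q \<zeta> = mat 1"
proof -
  define N where "N = real CARD('e)"
  have N: "N > 2" using card_gt_2 by (simp add: N_def)
  define a where "a = complex_of_real N - \<zeta> * complex_of_real (N - 2)"
  have W: "Wmat Q \<zeta> = a *m mat 1 - (2 * \<zeta>) *m cmat Q"
    by (simp add: Wmat_def Let_def a_def N_def vec_eq_iff algebra_simps)
  have "cmod (complex_of_real (N - 2)) = N - 2"
    using N by (simp only: norm_of_real)
  then have "cmod (\<zeta> * complex_of_real (N - 2)) = cmod \<zeta> * (N - 2)"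
    by (simp only: norm_mult)
  then have "N - cmod \<zeta> * (N - 2) \<le> cmod a"
    unfolding a_def by (metis norm_of_real norm_triangle_ineq2 abs_of_pos N order_less_trans
        zero_less_numeral)
  moreover have "2 * cmod \<zeta> < N - cmod \<zeta> * (N - 2)"
    using z N by (simp add: algebra_simps)
  ultimately have "cmod (2 * \<zeta>) < cmod a" by (simp add: norm_mult)
  then have "\<And>x. Wmat Q \<zeta> *v x = 0 \<Longrightarrow> x = 0"
    unfolding W by (rule stochastic_shift_kernel[OF nonneg row_sums])
  then show "Wmat Q \<zeta> ** matrix_inv (Wmat Q \<zeta>) = mat 1"
    and "matrix_inv (Wmat Q \<zeta>) ** Wmat Q \<zeta> = mat 1"
    by (simp_all add: matrix_inv_of_trivial_kernel)
qed

lemma Q_Jmat: "cmat Q ** Jmat = Jmat"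
  by (simp add: Q_Jr flip: cmat_Jr cmat_mult)

lemma trace_Jmat: "trace (Jmat :: complex^'e^'e) = 1"
  using N_pos by (simp add: trace_def Jmat_def)

lemma L0_resolvent_identity:
  assumes "C ** cmat Q = cmat Q ** C"
  shows "of_nat CARD('e) *m (C - \<zeta> *m L0 Q C)
    = Wmat Q \<zeta> ** C - (2 * \<zeta> * trace C / of_nat CARD('e)) *m (mat 1 - cmat Q)"
proof -
  define N where "N = (of_nat CARD('e) :: complex)"
  have N: "N \<noteq> 0" using N_pos by (simp add: N_def)
  have W: "Wmat Q \<zeta> ** C = N *m C - \<zeta> *m ((N - 2) *m C + 2 *m (cmat Q ** C))"
    by (simp add: Wmat_def Let_def N_def matrix_diff_rdistrib matrix_add_rdistrib msc_mult_left)
  show ?thesis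
    unfolding W N_def[symmetric] using N
    by (simp add: L0_def Let_def assms vec_eq_iff N_def[symmetric] field_simps power2_eq_square)
qed

text \<open>\<open>W J = N(1 - \<zeta>) J\<close>, hence \<open>W\<^sup>-\<^sup>1 J = J / (N(1 - \<zeta>))\<close>.\<close>
lemma inverse_Wmat_Jmat:
  assumes z1: "\<zeta> \<noteq> 1" and MW: "M ** Wmat Q \<zeta> = mat 1"
  shows "M ** Jmat = (1 / (of_nat CARD('e) * (1 - \<zeta>))) *m Jmat"
proof -
  define k where "k = of_nat CARD('e) * (1 - \<zeta>)"
  have k: "k \<noteq> 0" using N_pos z1 by (simp add: k_def)
  have WJ: "Wmat Q \<zeta> ** Jmat = k *m Jmat"
    by (simp add: k_def Wmat_decomp matrix_add_rdistrib matrix_diff_rdistrib msc_mult_left Q_Jmat)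
  have "Jmat = (M ** Wmat Q \<zeta>) ** Jmat" by (simp add: MW)
  also have "\<dots> = k *m (M ** Jmat)"
    by (simp add: WJ msc_mult_right flip: matrix_mul_assoc)
  finally have "(1 / k) *m Jmat = (1 / k * k) *m (M ** Jmat)"
    unfolding msc_msc[symmetric] by (rule arg_cong)
  then show ?thesis using k by (simp add: k_def)
qed

text \<open>Taking the trace of \<open>W\<^sup>-\<^sup>1 W = I\<close> with \<open>W = N(1 - \<zeta>) I + 2\<zeta> (I - Q)\<close>.\<close>
lemma trace_inverse_Wmat:
  assumes MW: "M ** Wmat Q \<zeta> = mat 1"
  shows "of_nat CARD('e) * (1 - \<zeta>) * trace M + 2 * \<zeta> * trace (M ** (mat 1 - cmat Q))
    = of_nat CARD('e)"
proof -
  have "M ** Wmat Q \<zeta> = (of_nat CARD('e) * (1 - \<zeta>)) *m M + (2 * \<zeta>) *m (M ** (mat 1 - cmat Q))"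
    by (simp add: Wmat_decomp matrix_add_ldistrib msc_mult_right)
  then show ?thesis
    using arg_cong[OF MW, of trace] by (simp add: trace_add trace_msc trace_I)
qed

text \<open>Solving the resolvent equation \<open>S = J + \<zeta> L0 S\<close> for \<open>S\<close> commuting with \<open>Q\<close>:
  \<open>W S = N J + c (I - Q)\<close> with \<open>c = 2\<zeta> tr S / N\<close>, so \<open>S = J/(1 - \<zeta>) + c M (I - Q)\<close> for
  \<open>M = W\<^sup>-\<^sup>1\<close>; taking traces gives \<open>tr S \<cdot> (1 - \<zeta>)\<^sup>2 tr M = 1\<close>, which determines \<open>c\<close>.\<close>
lemma resolvent_closed_form:
  assumes z1: "\<zeta> \<noteq> 1" and WM: "Wmat Q \<zeta> ** M = mat 1" and MW: "M ** Wmat Q \<zeta> = mat 1"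
    and comm: "S ** cmat Q = cmat Q ** S" and fixpoint: "S = Jmat + \<zeta> *m L0 Q S"
  shows "S = (1 / (1 - \<zeta>)) *m Jmat
    + (2 * \<zeta> / (of_nat CARD('e) * (1 - \<zeta>)^2 * trace M)) *m ((mat 1 - cmat Q) ** M)"
proof -
  define N where "N = (of_nat CARD('e) :: complex)"
  define c where "c = 2 * \<zeta> * trace S / N"
  define T where "T = trace (M ** (mat 1 - cmat Q))"
  have N: "N \<noteq> 0" using N_pos by (simp add: N_def)
  have z: "1 - \<zeta> \<noteq> 0" using z1 by simp
  have "S - \<zeta> *m L0 Q S = Jmat" using fixpoint by (simp add: algebra_simps)
  then have WS: "Wmat Q \<zeta> ** S = N *m Jmat + c *m (mat 1 - cmat Q)"
    using L0_resolvent_identity[OF comm, of \<zeta>] by (simp add: N_def c_def)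
  have "S = (M ** Wmat Q \<zeta>) ** S" by (simp add: MW)
  then have S: "S = (1 / (1 - \<zeta>)) *m Jmat + c *m (M ** (mat 1 - cmat Q))"
    using N z inverse_Wmat_Jmat[OF z1 MW]
    by (simp add: WS matrix_add_ldistrib msc_mult_right msc_msc N_def flip: matrix_mul_assoc)
  then have "trace S = 1 / (1 - \<zeta>) + c * T"
    by (simp add: trace_add trace_msc trace_Jmat T_def)
  then have "N * trace S * (1 - \<zeta>) = N + (1 - \<zeta>) * trace S * (2 * \<zeta> * T)"
    using N z by (simp add: c_def field_simps)
  also have "2 * \<zeta> * T = N - N * (1 - \<zeta>) * trace M"
    using trace_inverse_Wmat[OF MW] by (simp add: N_def T_def algebra_simps)
  finally have "N * (trace S * (1 - \<zeta>)^2 * trace M) = N"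
    by (simp add: algebra_simps power2_eq_square)
  then have "trace S * (1 - \<zeta>)^2 * trace M = 1" using N by simp
  then have "trace S = 1 / ((1 - \<zeta>)^2 * trace M)"
    by (metis mult.assoc mult_eq_0_iff nonzero_eq_divide_eq zero_neq_one)
  then have "c = 2 * \<zeta> / (N * (1 - \<zeta>)^2 * trace M)"
    by (simp add: c_def mult.assoc)
  moreover have "M ** (mat 1 - cmat Q) = (mat 1 - cmat Q) ** M"
  proof (rule inverse_commute[OF WM MW])
    show "Wmat Q \<zeta> ** (mat 1 - cmat Q) = (mat 1 - cmat Q) ** Wmat Q \<zeta>"
      by (simp add: Wmat_decomp matrix_add_ldistrib matrix_add_rdistrib msc_mult_left
          msc_mult_right)
  qed
  ultimately show ?thesis using S by (simp add: N_def)
qed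

end

theorem corollary3p3:
  fixes Q :: "real^'e^'e" and \<zeta> :: complex
  assumes "CARD('e) > 8"
    and "stochastic Q" and "irreducible_mat Q"
    and "\<forall>x y. Q$x$y = Q$y$x" and "trace Q = 0"
    and "cmod \<zeta> < 1"
  shows "summable (\<lambda>n. l1norm (\<zeta>^n *m (L0 Q ^^ n) Jmat))
    \<and> (\<lambda>n. \<zeta>^n *m (L0 Q ^^ n) Jmat) sums
      ((1 / (1 - \<zeta>)) *m Jmat
       + (let N = of_nat CARD('e) :: complex;
              M = matrix_inv (N *m mat 1 - \<zeta> *m ((N - 2) *m mat 1 + 2 *m cmat Q))
          in (2 * \<zeta> / (N * (1 - \<zeta>)^2 * trace M)) *m ((mat 1 - cmat Q) ** M)))"
proof -
  interpret irreducible_sym_stochastic Q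
    using assms unfolding stochastic_def by unfold_locales auto
  define f where "f = (\<lambda>n. \<zeta>^n *m (L0 Q ^^ n) Jmat)"
  define K where "K = 2 + (4 / real CARD('e)) * lyap Q (Jr - Z)"
  have bound: "l1norm ((L0 Q ^^ n) Jmat) \<le> real CARD('e) * real CARD('e) * K" for n
    by (rule l1norm_le_entry_bound) (use L0r_iterates_bounded in \<open>simp add: L0_iterates_cmat K_def\<close>)
  have l1: "summable (\<lambda>n. l1norm (f n))" and "summable f"
    unfolding f_def by (rule bounded_power_series_summable[OF assms(6) bound])+
  from \<open>summable f\<close> have "f sums suminf f" by (rule summable_sums)
  moreover have "suminf f ** cmat Q = cmat Q ** suminf f"
    using \<open>f sums suminf f\<close>
    by (rule sums_commute) (simp add: f_def msc_mult_left msc_mult_right L0_iterates_cmat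
        L0r_iterates_commute flip: cmat_mult)
  moreover have "suminf f = Jmat + \<zeta> *m L0 Q (suminf f)"
    using \<open>f sums suminf f\<close> by (intro power_series_fixed_point) (simp add: f_def)
  moreover have "\<zeta> \<noteq> 1" using assms(6) by auto
  ultimately show ?thesis
    using l1 resolvent_closed_form[OF _ Wmat_inverse[OF assms(6)]]
    by (simp add: f_def Wmat_def Let_def)
qed

end
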